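(* Let $g$ be a total recursive function such that, writing $\Phi_i(x,y)$ for the $i$-th $\Sigma^0_2$ formula, $\Phi_i(x,y)$ holds iff $W_{g(i,x,y)}$ is finite. Let $F(i,x,y,s)=\max_{y'\leq y}|W_{g(i,x,y'),s}|$, let $A_i=\{x:\forall y\ \lim_{s\to\infty}F(i,x,y,s)<\infty\}$, and let $$x(i,n,y,s)=\min\{x\in B^n:\forall x'\in B^n\ F(i,x,y,s)\leq F(i,x',y,s)\}.$$ Let $n$ be a natural number and $i$ an index such that $A_i$ is an infinite set with weak apartness and $A_i\cap B^n\neq\emptyset$. Then $\lim_{y\to\infty}\lim_{s\to\infty}x(i,n,y,s)$ exists and equals the unique element of $A_i\cap B^n$.
   Context: $W_e$ denotes the $e$-th recursively enumerable set and $W_{e,s}$ its enumeration up to stage $s$. For $x=\sum_{i=0}^{k}2^{n_i}\in\mathbb{Z}^+$ with $n_0<\cdots<n_k$, set $\mu(x)=n_k$ and $\lambda(x)=n_0$. For each $n$, $B^n=\{x\in\mathbb{Z}^+:\mu(x)=n\}$. A set $A$ has weak apartness if for every natural number $m$, $B^m\cap A$ has at most one element, and for every natural number $l$, there are at most two $x\in A$ with $\lambda(x)=l$. *)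

theory Defs
  imports Complex_Main
begin

definition mu :: "nat \<Rightarrow> nat" where
  "mu x = Max {k. bit x k}"

definition lam :: "nat \<Rightarrow> nat" where
  "lam x = Min {k. bit x k}"

definition B :: "nat \<Rightarrow> nat set" where
  "B n = {x. 0 < x \<and> mu x = n}"

definition weak_apartness :: "nat set \<Rightarrow> bool" where
  "weak_apartness A \<longleftrightarrow>
     (\<forall>m. \<forall>x\<in>B m \<inter> A. \<forall>x'\<in>B m \<inter> A. x = x') \<and>
     (\<forall>l. finite {x\<in>A. lam x = l} \<and> card {x\<in>A. lam x = l} \<le> 2)"

text \<open>Enumerations W e s (stage s approximation of the e-th r.e. set) are abstract
  parameters W :: nat => nat => nat set.\<close>

definition FF :: "(nat \<Rightarrow> nat \<Rightarrow> nat \<Rightarrow> nat) \<Rightarrow> (nat \<Rightarrow> nat \<Rightarrow> nat set)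
    \<Rightarrow> nat \<Rightarrow> nat \<Rightarrow> nat \<Rightarrow> nat \<Rightarrow> nat" where
  "FF g W i x y s = Max ((\<lambda>y'. card (W (g i x y') s)) ` {..y})"

definition AA :: "(nat \<Rightarrow> nat \<Rightarrow> nat \<Rightarrow> nat) \<Rightarrow> (nat \<Rightarrow> nat \<Rightarrow> nat set) \<Rightarrow> nat \<Rightarrow> nat set" where
  "AA g W i = {x. 0 < x \<and> (\<forall>y. \<exists>L::nat. (\<lambda>s. FF g W i x y s) \<longlonglongrightarrow> L)}"

definition xsel :: "(nat \<Rightarrow> nat \<Rightarrow> nat \<Rightarrow> nat) \<Rightarrow> (nat \<Rightarrow> nat \<Rightarrow> nat set)
    \<Rightarrow> nat \<Rightarrow> nat \<Rightarrow> nat \<Rightarrow> nat \<Rightarrow> nat" where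
  "xsel g W i n y s = Min {x\<in>B n. \<forall>x'\<in>B n. FF g W i x y s \<le> FF g W i x' y s}"

end

theory Submission
  imports Defs
begin

text \<open>Weak apartness leaves exactly one element a of A_i in the finite block B^n. Every other
  x in B^n lies outside A_i, so for some y, and then by monotonicity in y for all larger y,
  the stage approximations F(i,x,y,s) grow without bound, whereas F(i,a,y,s) settles on a
  finite value. Hence for all large y, a is eventually in s the unique minimiser selected by
  x(i,n,y,s).\<close>

lemma bit_nat_imp_less: "bit (x::nat) k \<Longrightarrow> k < x"
  using bit_take_bit_iff[of x x k] take_bit_nat_eq_self[OF less_exp[of x]] by simp

lemma finite_bits_nat: "finite {k. bit (x::nat) k}"
  using bit_nat_imp_less by (metis bounded_nat_set_is_finite mem_Collect_eq)

lemma B_subset_lessThan: "B n \<subseteq> {..<2 ^ Suc n}"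
proof
  fix x assume "x \<in> B n"
  then have "Max {k. bit x k} = n" by (simp add: B_def mu_def)
  then have no_high_bit: "\<not> bit x k" if "n < k" for k
    using that Max_ge[OF finite_bits_nat, of k x] by auto
  then have "take_bit (Suc n) x = x"
    by (intro bit_eqI) (metis bit_take_bit_iff no_high_bit not_less_eq)
  then show "x \<in> {..<2 ^ Suc n}"
    by (metis take_bit_nat_less_exp lessThan_iff)
qed

lemma finite_B: "finite (B n)"
  using B_subset_lessThan finite_subset by blast

lemma incseq_nat_not_convergent_imp_filterlim_at_top:
  fixes f :: "nat \<Rightarrow> nat"
  assumes "incseq f" and "\<nexists>L. f \<longlonglongrightarrow> L"
  shows "filterlim f at_top sequentially"
  unfolding filterlim_at_top
proof
  fix Z
  show "\<forall>\<^sub>F s in sequentially. Z \<le> f s"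
  proof (rule ccontr)
    assume "\<not> (\<forall>\<^sub>F s in sequentially. Z \<le> f s)"
    then have "\<forall>N. \<exists>s\<ge>N. f s < Z"
      by (auto simp: eventually_sequentially not_le)
    then have "f N < Z" for N
      using \<open>incseq f\<close> by (meson incseqD le_less_trans)
    then have "bdd_above (range f)"
      by (intro bdd_aboveI2[where M = Z]) (simp add: less_imp_le)
    then have "f \<longlonglongrightarrow> (SUP s. f s)"
      using \<open>incseq f\<close> by (rule LIMSEQ_incseq_SUP)
    then show False using assms(2) by blast
  qed
qed

lemma eventually_unique_minimiser:
  fixes F :: "'a \<Rightarrow> nat \<Rightarrow> nat \<Rightarrow> nat"
  assumes "finite S" "a \<in> S"
    and incseq: "\<And>x y. incseq (F x y)"
    and mono: "\<And>x s. mono (\<lambda>y. F x y s)"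
    and converges: "\<And>y. \<exists>L. F a y \<longlonglongrightarrow> L"
    and diverges: "\<And>x. x \<in> S - {a} \<Longrightarrow> \<exists>y. \<nexists>L. F x y \<longlonglongrightarrow> L"
  shows "\<forall>\<^sub>F y in sequentially. \<forall>\<^sub>F s in sequentially. \<forall>x\<in>S - {a}. F a y s < F x y s"
proof -
  have "\<forall>\<^sub>F y in sequentially. filterlim (F x y) at_top sequentially" if x: "x \<in> S - {a}" for x
  proof -
    obtain y0 where y0: "\<nexists>L. F x y0 \<longlonglongrightarrow> L" using diverges[OF x] by blast
    have "filterlim (F x y0) at_top sequentially"
      using incseq y0 by (rule incseq_nat_not_convergent_imp_filterlim_at_top)
    then have "filterlim (F x y) at_top sequentially" if "y0 \<le> y" for y
      using monoD[OF mono that] by (auto elim: filterlim_at_top_mono)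
    then show ?thesis by (auto simp: eventually_sequentially)
  qed
  then have "\<forall>\<^sub>F y in sequentially. \<forall>x\<in>S - {a}. filterlim (F x y) at_top sequentially"
    using \<open>finite S\<close> by (intro eventually_ball_finite) auto
  then show ?thesis
  proof (rule eventually_mono)
    fix y assume diverging: "\<forall>x\<in>S - {a}. filterlim (F x y) at_top sequentially"
    obtain L where "F a y \<longlonglongrightarrow> L" using converges by blast
    then have "\<forall>\<^sub>F s in sequentially. F a y s = L" by (simp add: tendsto_discrete)
    moreover have "\<forall>\<^sub>F s in sequentially. \<forall>x\<in>S - {a}. Suc L \<le> F x y s"
      using \<open>finite S\<close> diverging by (intro eventually_ball_finite) (auto simp: filterlim_at_top)
    ultimately show "\<forall>\<^sub>F s in sequentially. \<forall>x\<in>S - {a}. F a y s < F x y s"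
      by eventually_elim (simp add: Suc_le_eq)
  qed
qed

lemma minimisers_eq_singleton:
  fixes f :: "'a \<Rightarrow> 'b::linorder"
  assumes "a \<in> S" "\<forall>x\<in>S - {a}. f a < f x"
  shows "{x\<in>S. \<forall>x'\<in>S. f x \<le> f x'} = {a}"
proof -
  have "f a \<le> f x" if "x \<in> S" for x
    using assms that by (cases "x = a") (auto intro: less_imp_le)
  moreover have "x = a" if "x \<in> S" "f x \<le> f a" for x
    using assms that by (metis DiffI singletonD not_le)
  ultimately show ?thesis using \<open>a \<in> S\<close> by auto
qed

lemma FF_incseq:
  assumes "\<And>e s. finite (W e s)" and "\<And>e s t. s \<le> t \<Longrightarrow> W e s \<subseteq> W e t"
  shows "incseq (FF g W i x y)"
proof (rule incseq_SucI)
  fix s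
  have "card (W (g i x y') s) \<le> FF g W i x y (Suc s)" if "y' \<le> y" for y'
  proof -
    have "card (W (g i x y') s) \<le> card (W (g i x y') (Suc s))"
      using assms by (simp add: card_mono)
    also have "\<dots> \<le> FF g W i x y (Suc s)"
      unfolding FF_def using that by (intro Max_ge) auto
    finally show ?thesis .
  qed
  then show "FF g W i x y s \<le> FF g W i x y (Suc s)"
    unfolding FF_def[of g W i x y s] by simp
qed

lemma FF_mono_bound: "mono (\<lambda>y. FF g W i x y s)"
  unfolding FF_def by (intro monoI Max_mono) auto

theorem lemma3p4:
  fixes g :: "nat \<Rightarrow> nat \<Rightarrow> nat \<Rightarrow> nat"
    and W :: "nat \<Rightarrow> nat \<Rightarrow> nat set"
    and \<Phi> :: "nat \<Rightarrow> nat \<Rightarrow> nat \<Rightarrow> bool"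
    and i n :: nat
  assumes W_fin: "\<And>e s. finite (W e s)"
    and W_mono: "\<And>e s t. s \<le> t \<Longrightarrow> W e s \<subseteq> W e t"
    and g_Phi: "\<And>i x y. \<Phi> i x y \<longleftrightarrow> finite (\<Union>s. W (g i x y) s)"
    and inf: "infinite (AA g W i)"
    and wa: "weak_apartness (AA g W i)"
    and ne: "AA g W i \<inter> B n \<noteq> {}"
  shows "\<exists>h::nat \<Rightarrow> nat.
           (\<forall>\<^sub>F y in sequentially. (\<lambda>s. xsel g W i n y s) \<longlonglongrightarrow> h y) \<and>
           h \<longlonglongrightarrow> (THE a. a \<in> AA g W i \<inter> B n)"
proof -
  obtain a where a: "a \<in> AA g W i \<inter> B n" using ne by blast
  have unique: "x = a" if "x \<in> AA g W i \<inter> B n" for x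
    using wa a that unfolding weak_apartness_def by blast
  have "\<forall>\<^sub>F y in sequentially. \<forall>\<^sub>F s in sequentially.
          \<forall>x\<in>B n - {a}. FF g W i a y s < FF g W i x y s"
  proof (rule eventually_unique_minimiser[OF finite_B])
    show "\<exists>L. FF g W i a y \<longlonglongrightarrow> L" for y using a by (simp add: AA_def)
    show "\<exists>y. \<nexists>L. FF g W i x y \<longlonglongrightarrow> L" if "x \<in> B n - {a}" for x
    proof -
      have "x \<notin> AA g W i" "0 < x" using that unique by (auto simp: B_def)
      then show ?thesis by (simp add: AA_def)
    qed
  qed (use a FF_incseq[OF W_fin W_mono] FF_mono_bound in auto)
  then have "\<forall>\<^sub>F y in sequentially. \<forall>\<^sub>F s in sequentially. xsel g W i n y s = a"
    using a by (auto simp: xsel_def minimisers_eq_singleton elim!: eventually_mono)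
  then have "\<forall>\<^sub>F y in sequentially. (\<lambda>s. xsel g W i n y s) \<longlonglongrightarrow> a"
    by (simp add: tendsto_discrete)
  moreover have "(THE a. a \<in> AA g W i \<inter> B n) = a" using a unique by blast
  ultimately show ?thesis by auto
qed

end
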